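(* Let $R$ be an integral domain and $M$ an $R$-module. If $x,y\in M$ are non-torsion elements and $[x]=[y]\in\mathbb{P}(M)$, then there exist $a,b\in R$ such that $ax=by\neq0$.
   Context: For an $R$-module $M$ let $M^\circ=M\setminus\{0\}$. Define a relation on $M^\circ$ by $x\sim' y$ if there exist $m\in M$ and $r,s\in R$ with $x=rm$ and $y=sm$. Let $\sim$ be the equivalence relation generated by $\sim'$ (i.e. $x\sim y$ iff there is a finite chain $x=x_0\sim'x_1\sim'\cdots\sim'x_n=y$). The projective space is $\mathbb{P}(M)=M^\circ/\sim$, and $[x]$ denotes the class of $x$. An element $x$ is torsion if $rx=0$ for some nonzero $r\in R$. *)

theory Defs
  imports Complex_Main
begin

text \<open>An R-module M is represented by a type 'b :: ab_group_add together with a scalar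
  multiplication scale satisfying the locale module (HOL.Modules); R is a type of class idom.\<close>

definition proj_rel0 :: "('a::comm_ring_1 \<Rightarrow> 'b::ab_group_add \<Rightarrow> 'b) \<Rightarrow> 'b \<Rightarrow> 'b \<Rightarrow> bool" where
  "proj_rel0 scale x y \<longleftrightarrow> x \<noteq> 0 \<and> y \<noteq> 0 \<and> (\<exists>m r s. x = scale r m \<and> y = scale s m)"

definition proj_rel :: "('a::comm_ring_1 \<Rightarrow> 'b::ab_group_add \<Rightarrow> 'b) \<Rightarrow> 'b \<Rightarrow> 'b \<Rightarrow> bool" where
  "proj_rel scale x y \<longleftrightarrow> x \<noteq> 0 \<and> y \<noteq> 0 \<and> (proj_rel0 scale)\<^sup>*\<^sup>* x y"

definition proj_class :: "('a::comm_ring_1 \<Rightarrow> 'b::ab_group_add \<Rightarrow> 'b) \<Rightarrow> 'b \<Rightarrow> 'b set" where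
  "proj_class scale x = {y. proj_rel scale x y}"

definition torsion :: "('a::comm_ring_1 \<Rightarrow> 'b::ab_group_add \<Rightarrow> 'b) \<Rightarrow> 'b \<Rightarrow> bool" where
  "torsion scale x \<longleftrightarrow> (\<exists>r. r \<noteq> 0 \<and> scale r x = 0)"

end

theory Submission
  imports Defs
begin

text \<open>Over an integral domain the relation a x = b y with a, b \<noteq> 0 is transitive, and an
  elementary step r m ~' s m starting at a non-torsion element r m satisfies s (r m) = r (s m)
  with r, s \<noteq> 0 and ends at a non-torsion element. Following the chain from y to x thus gives
  a y = b x with a, b \<noteq> 0, and this is nonzero because y is not torsion.\<close>

definition commensurable :: "('a::comm_ring_1 \<Rightarrow> 'b::ab_group_add \<Rightarrow> 'b) \<Rightarrow> 'b \<Rightarrow> 'b \<Rightarrow> bool" where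
  "commensurable scale x y \<longleftrightarrow> (\<exists>a b. a \<noteq> 0 \<and> b \<noteq> 0 \<and> scale a x = scale b y)"

lemma (in module) not_torsion_imp_nonzero: "\<not> torsion scale x \<Longrightarrow> x \<noteq> 0"
  unfolding torsion_def by (metis one_neq_zero scale_zero_right)

lemma not_torsion_scale_iff:
  fixes scale :: "'a::idom \<Rightarrow> 'b::ab_group_add \<Rightarrow> 'b"
  assumes "module scale"
  shows "\<not> torsion scale (scale r m) \<longleftrightarrow> r \<noteq> 0 \<and> \<not> torsion scale m"
proof -
  interpret module scale by fact
  have "scale t (scale r m) = scale (t * r) m" for t
    by simp
  then show ?thesis
    unfolding torsion_def
    by (metis mult_eq_0_iff one_neq_zero scale_left_commute scale_zero_left scale_zero_right)
qed

lemma commensurable_refl: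
  "commensurable (scale :: 'a::idom \<Rightarrow> 'b::ab_group_add \<Rightarrow> 'b) x x"
  unfolding commensurable_def by (metis one_neq_zero)

lemma commensurable_trans:
  fixes scale :: "'a::idom \<Rightarrow> 'b::ab_group_add \<Rightarrow> 'b"
  assumes "module scale" and "commensurable scale x y" and "commensurable scale y z"
  shows "commensurable scale x z"
proof -
  interpret module scale by fact
  obtain a b where ab: "a \<noteq> 0" "b \<noteq> 0" "scale a x = scale b y"
    using assms(2) unfolding commensurable_def by blast
  obtain c d where cd: "c \<noteq> 0" "d \<noteq> 0" "scale c y = scale d z"
    using assms(3) unfolding commensurable_def by blast
  have "scale (c * a) x = scale c (scale b y)"
    by (simp flip: ab(3))
  also have "\<dots> = scale b (scale d z)"
    by (simp only: scale_left_commute cd(3))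
  also have "\<dots> = scale (b * d) z"
    by simp
  finally have "scale (c * a) x = scale (b * d) z" .
  moreover have "c * a \<noteq> 0" and "b * d \<noteq> 0"
    using ab cd by simp_all
  ultimately show ?thesis
    unfolding commensurable_def by blast
qed

lemma proj_rel0_preserves_not_torsion:
  fixes scale :: "'a::idom \<Rightarrow> 'b::ab_group_add \<Rightarrow> 'b"
  assumes "module scale" and "proj_rel0 scale z w" and "\<not> torsion scale z"
  shows "\<not> torsion scale w \<and> commensurable scale z w"
proof -
  interpret module scale by fact
  obtain m r s where "w \<noteq> 0" and z: "z = scale r m" and w: "w = scale s m"
    using assms(2) unfolding proj_rel0_def by blast
  then have "s \<noteq> 0"
    by auto
  moreover have "r \<noteq> 0" and "\<not> torsion scale m"
    using assms(1,3) z not_torsion_scale_iff by blast+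
  moreover have "scale s z = scale r w"
    using z w by (simp add: mult.commute)
  ultimately show ?thesis
    unfolding commensurable_def using assms(1) w not_torsion_scale_iff by blast
qed

lemma rtranclp_proj_rel0_preserves_not_torsion:
  fixes scale :: "'a::idom \<Rightarrow> 'b::ab_group_add \<Rightarrow> 'b"
  assumes "module scale" and "(proj_rel0 scale)\<^sup>*\<^sup>* y x" and "\<not> torsion scale y"
  shows "\<not> torsion scale x \<and> commensurable scale y x"
  using assms(2)
proof (induction rule: rtranclp_induct)
  case base
  show ?case
    using assms(3) commensurable_refl by blast
next
  case (step z w)
  then show ?case
    using assms(1) proj_rel0_preserves_not_torsion commensurable_trans by blast
qed

lemma proj_class_eq_imp_rtranclp:
  assumes "x \<noteq> 0" and "proj_class scale x = proj_class scale y"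
  shows "(proj_rel0 scale)\<^sup>*\<^sup>* y x"
proof -
  have "x \<in> proj_class scale x"
    using assms(1) unfolding proj_class_def proj_rel_def by simp
  then show ?thesis
    using assms(2) unfolding proj_class_def proj_rel_def by simp
qed

theorem theorem4p3:
  fixes scale :: "'a::idom \<Rightarrow> 'b::ab_group_add \<Rightarrow> 'b" and x y :: 'b
  assumes "module scale"
    and "\<not> torsion scale x" and "\<not> torsion scale y"
    and "proj_class scale x = proj_class scale y"
  shows "\<exists>a b. scale a x = scale b y \<and> scale a x \<noteq> 0"
proof -
  have "x \<noteq> 0"
    using assms(1,2) module.not_torsion_imp_nonzero by blast
  then have "(proj_rel0 scale)\<^sup>*\<^sup>* y x"
    using assms(4) proj_class_eq_imp_rtranclp by blast
  then obtain a b where "a \<noteq> 0" "b \<noteq> 0" and ab: "scale a y = scale b x"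
    using assms(1,3) rtranclp_proj_rel0_preserves_not_torsion unfolding commensurable_def by blast
  moreover have "scale a y \<noteq> 0"
    using \<open>a \<noteq> 0\<close> assms(3) unfolding torsion_def by blast
  ultimately show ?thesis
    by metis
qed

end
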